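(* Fix $p\in(0,1)$ and consider the Alternating Path Randomized Design. Let $\mathcal{P}_i=(v_{i,1},\dots,v_{i,k(i)+1})$ be a component and write $y_j=Y_{v_{i,j},v_{i,j+1}}$ for $j=1,\dots,k(i)$. If $\mathcal{P}_i$ is a path ($v_{i,k(i)+1}\neq v_{i,1}$), then \[\mathrm{Var}(\hat\Gamma_i)=\frac1p\sum_{j=1}^{k(i)}y_j^2+2\sum_{1\le j<q\le k(i)}p^{q-j-1}y_jy_q.\] If $\mathcal{P}_i$ is a cycle, then, with $k=k(i)$, \[\mathrm{Var}(\hat\Gamma_i)=\frac1p\sum_{j=1}^{k-1}y_j^2+2\sum_{1\le j<q\le k-1}p^{q-j-1}y_jy_q+\frac{p^2+2p-p^{k-1}}{1+p^{k-1}}\,y_k^2+2\sum_{j=1}^{k-1}(-1)^j\Big(\frac{(1-(-p)^{k-1-j})(1-(-p)^{j-1})}{1+p^{k-1}}-1\Big)y_jy_k.\]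
   Context: Setting: $2N$ agents; $\mathbb{M}^t,\mathbb{M}^c$ are one-to-one matchings (sets of unordered pairs of distinct agents, each agent in at most one pair); each pair $(a,b)$ has a fixed real potential outcome $Y_{a,b}$. The disagreement set $\triangle\mathbb{M}^{(t,c)}=(\mathbb{M}^t\cup\mathbb{M}^c)\setminus(\mathbb{M}^t\cap\mathbb{M}^c)$, viewed as a graph, has connected components $\mathcal{P}_1,\dots,\mathcal{P}_m$, each an alternating path or cycle: a sequence $(v_{i,1},\dots,v_{i,k(i)+1})$ whose consecutive pairs $e_{i,j}=(v_{i,j},v_{i,j+1})$, $j=1,\dots,k(i)$, are its edges, alternating between $\triangle\mathbb{M}^{(t,c)}_t=\triangle\mathbb{M}^{(t,c)}\cap\mathbb{M}^t$ and $\triangle\mathbb{M}^{(t,c)}_c=\triangle\mathbb{M}^{(t,c)}\cap\mathbb{M}^c$; a cycle if $v_{i,1}=v_{i,k(i)+1}$, a path otherwise. Alternating Path Randomized Design with parameter $p$: indicators $W_{i,j}\in\{0,1\}$, independent across components; within $\mathcal{P}_i$, $\mathbb{P}(W_{i,1}=1)=p/(1+p)$; for $2\le j\le k(i)$ (path) or $2\le j\le k(i)-1$ (cycle), conditionally on $W_{i,1},\dots,W_{i,j-1}$, $W_{i,j}=1$ with probability $p$ if $W_{i,j-1}=0$ and $W_{i,j}=0$ if $W_{i,j-1}=1$; for a cycle, $W_{i,k(i)}=1$ iff $W_{i,1}=W_{i,k(i)-1}=0$. Path-level Horvitz–Thompson estimator: $\hat\Gamma_i=\sum_{j:\,e_{i,j}\in\triangle\mathbb{M}^{(t,c)}_t}\frac{W_{i,j}Y_{e_{i,j}}}{\mathbb{P}(W_{i,j}=1)}-\sum_{j:\,e_{i,j}\in\triangle\mathbb{M}^{(t,c)}_c}\frac{W_{i,j}Y_{e_{i,j}}}{\mathbb{P}(W_{i,j}=1)}$.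 *)

theory Defs
  imports "HOL-Probability.Probability"
begin

text \<open>Unordered pairs of agents are represented as two-element sets.\<close>

definition is_matching :: "'a set \<Rightarrow> 'a set set \<Rightarrow> bool" where
  "is_matching A M \<longleftrightarrow>
     (\<forall>e\<in>M. \<exists>a b. a \<in> A \<and> b \<in> A \<and> a \<noteq> b \<and> e = {a, b}) \<and>
     (\<forall>e\<in>M. \<forall>e'\<in>M. e \<noteq> e' \<longrightarrow> e \<inter> e' = {})"

definition disagree :: "'a set set \<Rightarrow> 'a set set \<Rightarrow> 'a set set" where
  "disagree Mt Mc = (Mt \<union> Mc) - (Mt \<inter> Mc)"

definition disagree_t :: "'a set set \<Rightarrow> 'a set set \<Rightarrow> 'a set set" where
  "disagree_t Mt Mc = disagree Mt Mc \<inter> Mt"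

definition disagree_c :: "'a set set \<Rightarrow> 'a set set \<Rightarrow> 'a set set" where
  "disagree_c Mt Mc = disagree Mt Mc \<inter> Mc"

text \<open>Edge j (1-based) of the vertex sequence v_1, ..., v_(k+1).\<close>
definition edge :: "(nat \<Rightarrow> 'a) \<Rightarrow> nat \<Rightarrow> 'a set" where
  "edge v j = {v j, v (Suc j)}"

text \<open>(v_1,...,v_(k+1)) is an alternating path or cycle that forms a connected
  component of the disagreement graph.\<close>
definition is_component ::
  "'a set set \<Rightarrow> 'a set set \<Rightarrow> (nat \<Rightarrow> 'a) \<Rightarrow> nat \<Rightarrow> bool" where
  "is_component Mt Mc v k \<longleftrightarrow>
     k \<ge> 1 \<and>
     (if v (k + 1) = v 1 then inj_on v {1..k} else inj_on v {1..k+1}) \<and>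
     (\<forall>j\<in>{1..k}. edge v j \<in> disagree Mt Mc) \<and>
     (\<forall>j\<in>{1..<k}. edge v j \<in> disagree_t Mt Mc \<longleftrightarrow> edge v (Suc j) \<in> disagree_c Mt Mc) \<and>
     (\<forall>e\<in>disagree Mt Mc. (\<exists>j\<in>{1..k+1}. v j \<in> e) \<longrightarrow> (\<exists>j\<in>{1..k}. e = edge v j))"

fun apr_chain :: "real \<Rightarrow> nat \<Rightarrow> bool \<Rightarrow> bool list pmf" where
  "apr_chain p 0 b = return_pmf []"
| "apr_chain p (Suc n) b =
     do { w \<leftarrow> (if b then return_pmf False else bernoulli_pmf p);
          ws \<leftarrow> apr_chain p n w;
          return_pmf (w # ws) }"

text \<open>Alternating Path Randomized Design on a path with k edges:
  list entry j-1 is W_(i,j).\<close>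
definition apr_path :: "real \<Rightarrow> nat \<Rightarrow> bool list pmf" where
  "apr_path p k =
     do { w1 \<leftarrow> bernoulli_pmf (p / (1 + p));
          ws \<leftarrow> apr_chain p (k - 1) w1;
          return_pmf (w1 # ws) }"

definition apr_cycle :: "real \<Rightarrow> nat \<Rightarrow> bool list pmf" where
  "apr_cycle p k =
     do { w1 \<leftarrow> bernoulli_pmf (p / (1 + p));
          ws \<leftarrow> apr_chain p (k - 2) w1;
          return_pmf (w1 # ws @ [\<not> w1 \<and> \<not> last (w1 # ws)]) }"

definition apr_design ::
  "real \<Rightarrow> (nat \<Rightarrow> 'a) \<Rightarrow> nat \<Rightarrow> bool list pmf" where
  "apr_design p v k = (if v (k + 1) = v 1 then apr_cycle p k else apr_path p k)"

definition HT_est ::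
  "'a set set \<Rightarrow> 'a set set \<Rightarrow> ('a set \<Rightarrow> real) \<Rightarrow> bool list pmf \<Rightarrow>
   (nat \<Rightarrow> 'a) \<Rightarrow> nat \<Rightarrow> bool list \<Rightarrow> real" where
  "HT_est Mt Mc Y D v k W =
     (\<Sum>j\<in>{j\<in>{1..k}. edge v j \<in> disagree_t Mt Mc}.
        (if W ! (j - 1) then 1 else 0) * Y (edge v j) / measure_pmf.prob D {w. w ! (j - 1)})
   - (\<Sum>j\<in>{j\<in>{1..k}. edge v j \<in> disagree_c Mt Mc}.
        (if W ! (j - 1) then 1 else 0) * Y (edge v j) / measure_pmf.prob D {w. w ! (j - 1)})"

end

(*
  Along a component the indicators W_1, W_2, ... form a two-state Markov chain (after a 1 comes
  a 0, after a 0 comes a 1 with probability p) started in its stationary law P(W = 1) = p/(1+p).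
  The transition matrix has eigenvalues 1 and -p, so the d-step transition probabilities are
  pi(a) + ([a = b] - pi(a)) (-p)^d and Cov(W_j, W_q) / (E W_j E W_q) = (-p)^(q-j) / p.
  Treated and control edges alternate, so the Horvitz-Thompson weights carry the signs
  (-1)^(j+q), which turn these normalised covariances into p^(q-j-1).  A cycle has even length,
  and its last indicator is (not W_1 and not W_(k-1)); its moments follow from the two- and
  three-point laws of the chain.
*)

theory Submission
  imports Defs
begin

lemma measure_bind_pmf_finite:
  assumes "finite A" "set_pmf M \<subseteq> A"
  shows "measure_pmf.prob (bind_pmf M f) X = (\<Sum>a\<in>A. pmf M a * measure_pmf.prob (f a) X)"
proof -
  have "measure_pmf.prob (bind_pmf M f) X = (\<integral>a. measure_pmf.prob (f a) X \<partial>M)"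
    unfolding measure_pmf_bind
    by (rule measure_pmf.measure_bind[where N = "count_space UNIV"])
      (auto simp: space_subprob_algebra subprob_space_measure_pmf)
  also have "\<dots> = (\<Sum>a\<in>A. pmf M a * measure_pmf.prob (f a) X)"
    using assms by (subst integral_measure_pmf[of A]) auto
  finally show ?thesis .
qed

lemma measure_pmf_prob_cong:
  assumes "\<And>x. x \<in> set_pmf M \<Longrightarrow> x \<in> A \<longleftrightarrow> x \<in> B"
  shows "measure_pmf.prob M A = measure_pmf.prob M B"
proof -
  have "A \<inter> set_pmf M = B \<inter> set_pmf M" using assms by blast
  then show ?thesis by (metis measure_Int_set_pmf)
qed

lemma expectation_of_bool_pmf:
  "measure_pmf.expectation D (\<lambda>w. of_bool (P w) :: real) = measure_pmf.prob D {w. P w}"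
proof -
  have "(\<lambda>w. of_bool (P w) :: real) = indicator {w. P w}" by (auto simp: indicator_def)
  then show ?thesis by simp
qed

lemma integrable_of_bool_pmf: "integrable (measure_pmf D) (\<lambda>w. of_bool (P w) :: real)"
  by (rule measure_pmf.integrable_const_bound[where B = 1]) auto

lemma variance_sum_indicators:
  fixes c :: "'i \<Rightarrow> real"
  assumes "finite S"
  shows "measure_pmf.variance D (\<lambda>w. \<Sum>j\<in>S. c j * of_bool (P j w)) =
    (\<Sum>j\<in>S. \<Sum>q\<in>S. c j * c q *
       (measure_pmf.prob D {w. P j w \<and> P q w}
        - measure_pmf.prob D {w. P j w} * measure_pmf.prob D {w. P q w}))"
proof -
  let ?X = "\<lambda>w. \<Sum>j\<in>S. c j * of_bool (P j w) :: real"
  have square: "(?X w)\<^sup>2 = (\<Sum>j\<in>S. \<Sum>q\<in>S. c j * c q * of_bool (P j w \<and> P q w))" for w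
    by (simp add: power2_eq_square sum_product of_bool_conj algebra_simps)
  have "measure_pmf.variance D ?X =
      measure_pmf.expectation D (\<lambda>w. (?X w)\<^sup>2) - (measure_pmf.expectation D ?X)\<^sup>2"
    by (rule measure_pmf.variance_eq)
      (auto simp: square intro!: integrable_sum integrable_mult_right integrable_of_bool_pmf)
  also have "\<dots> = (\<Sum>j\<in>S. \<Sum>q\<in>S. c j * c q * measure_pmf.prob D {w. P j w \<and> P q w})
      - (\<Sum>j\<in>S. c j * measure_pmf.prob D {w. P j w})\<^sup>2"
    by (simp add: square integral_sum integrable_sum integrable_of_bool_pmf expectation_of_bool_pmf)
  also have "\<dots> = (\<Sum>j\<in>S. \<Sum>q\<in>S. c j * c q *
       (measure_pmf.prob D {w. P j w \<and> P q w}
        - measure_pmf.prob D {w. P j w} * measure_pmf.prob D {w. P q w}))"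
    by (simp add: power2_eq_square sum_product right_diff_distrib sum_subtractf mult_ac)
  finally show ?thesis .
qed

definition apr_step :: "real \<Rightarrow> bool \<Rightarrow> bool pmf" where
  "apr_step p b = (if b then return_pmf False else bernoulli_pmf p)"

lemma apr_chain_Suc:
  "apr_chain p (Suc n) b = bind_pmf (apr_step p b) (\<lambda>w. map_pmf (Cons w) (apr_chain p n w))"
  by (simp add: apr_step_def map_pmf_def)

declare apr_chain.simps(2) [simp del]

lemma pmf_apr_step:
  assumes "0 \<le> p" "p \<le> 1"
  shows "pmf (apr_step p b) c = (if b then of_bool (\<not> c) else if c then p else 1 - p)"
  using assms by (auto simp: apr_step_def)

lemma prob_apr_chain_Suc:
  "measure_pmf.prob (apr_chain p (Suc n) b) X =
     (\<Sum>c\<in>UNIV. pmf (apr_step p b) c * measure_pmf.prob (apr_chain p n c) {ws. c # ws \<in> X})"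
  unfolding apr_chain_Suc by (subst measure_bind_pmf_finite[of UNIV]) (auto simp: vimage_def)

lemma length_apr_chain: "ws \<in> set_pmf (apr_chain p n b) \<Longrightarrow> length ws = n"
  by (induction n arbitrary: b ws) (auto simp: apr_chain_Suc)

definition stationary_prob :: "real \<Rightarrow> bool \<Rightarrow> real" where
  "stationary_prob p a = (if a then p / (1 + p) else 1 / (1 + p))"

definition trans_prob :: "real \<Rightarrow> bool \<Rightarrow> nat \<Rightarrow> bool \<Rightarrow> real" where
  "trans_prob p b d a = stationary_prob p a + (of_bool (a = b) - stationary_prob p a) * (-p) ^ d"

lemma trans_prob_0 [simp]: "trans_prob p b 0 a = of_bool (a = b)"
  by (simp add: trans_prob_def)

lemma trans_prob_Suc:
  assumes "0 \<le> p" "p \<le> 1"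
  shows "(\<Sum>c\<in>UNIV. pmf (apr_step p b) c * trans_prob p c d a) = trans_prob p b (Suc d) a"
proof -
  have "1 + p \<noteq> 0" using assms by simp
  then show ?thesis using assms
    by (cases a; cases b)
      (simp_all add: UNIV_bool pmf_apr_step trans_prob_def stationary_prob_def divide_simps,
       simp_all add: algebra_simps)
qed

lemma stationary_prob_trans_prob:
  assumes "0 \<le> p"
  shows "(\<Sum>b\<in>UNIV. stationary_prob p b * trans_prob p b d a) = stationary_prob p a"
proof -
  have "1 + p \<noteq> 0" using assms by simp
  then show ?thesis
    by (cases a)
      (simp_all add: UNIV_bool trans_prob_def stationary_prob_def divide_simps, simp_all add: algebra_simps)
qed

lemma apr_chain_markov:
  assumes "0 \<le> p" "p \<le> 1" "i < n"
  shows "measure_pmf.prob (apr_chain p n b) {ws. ws ! i = a \<and> drop (Suc i) ws \<in> B} =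
    trans_prob p b (Suc i) a * measure_pmf.prob (apr_chain p (n - Suc i) a) B"
  using assms(3)
proof (induction i arbitrary: b n)
  case 0
  then obtain n' where "n = Suc n'" by (cases n) auto
  then show ?case
    by (cases a) (simp_all add: prob_apr_chain_Suc UNIV_bool flip: trans_prob_Suc[OF assms(1,2)])
next
  case (Suc i)
  then obtain n' where n: "n = Suc n'" and "i < n'" by (cases n) auto
  then show ?case
    by (simp add: prob_apr_chain_Suc Suc.IH sum_distrib_right mult.assoc
        flip: trans_prob_Suc[OF assms(1,2)])
qed

lemma apr_chain_one_point:
  assumes "0 \<le> p" "p \<le> 1" "i < n"
  shows "measure_pmf.prob (apr_chain p n b) {ws. ws ! i = a} = trans_prob p b (Suc i) a"
  using apr_chain_markov[OF assms, of b a UNIV] by simp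

lemma apr_chain_two_point:
  assumes "0 \<le> p" "p \<le> 1" "i < j" "j < n"
  shows "measure_pmf.prob (apr_chain p n b) {ws. ws ! i = a \<and> ws ! j = c} =
    trans_prob p b (Suc i) a * trans_prob p a (j - i) c"
proof -
  have "measure_pmf.prob (apr_chain p n b) {ws. ws ! i = a \<and> ws ! j = c} =
      measure_pmf.prob (apr_chain p n b)
        {ws. ws ! i = a \<and> drop (Suc i) ws \<in> {ws'. ws' ! (j - Suc i) = c}}"
    using assms by (intro measure_pmf_prob_cong) (auto dest: length_apr_chain)
  also have "\<dots> = trans_prob p b (Suc i) a * trans_prob p a (j - i) c"
    using assms by (subst apr_chain_markov) (simp_all add: apr_chain_one_point Suc_diff_Suc)
  finally show ?thesis .
qed

lemma apr_path_eq_bind_apr_chain: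
  assumes "0 \<le> p" "p \<le> 1" "1 \<le> m"
  shows "apr_path p m = bind_pmf (bernoulli_pmf (p / (1 + p))) (apr_chain p m)"
proof -
  \<comment> \<open>Drawing W_1 as one chain step from a stationary W_0 leaves its law unchanged.\<close>
  let ?W0 = "bernoulli_pmf (p / (1 + p))"
  have stationary: "bind_pmf ?W0 (apr_step p) = ?W0"
  proof (rule pmf_eqI)
    fix a
    have "1 + p \<noteq> 0" "p \<le> 1 + p" using assms by auto
    then show "pmf (bind_pmf ?W0 (apr_step p)) a = pmf ?W0 a"
      using assms by (cases a) (auto simp: pmf_bind apr_step_def divide_simps)
  qed
  obtain m' where m: "m = Suc m'" using assms by (cases m) auto
  show ?thesis
    unfolding m apr_chain_Suc bind_assoc_pmf[symmetric] stationary
    by (simp add: apr_path_def map_pmf_def)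
qed

lemma length_apr_path: "l \<in> set_pmf (apr_path p m) \<Longrightarrow> 1 \<le> m \<Longrightarrow> length l = m"
  by (auto simp: apr_path_def dest: length_apr_chain)

lemma apr_path_markov:
  assumes "0 \<le> p" "p \<le> 1" "i < m"
  shows "measure_pmf.prob (apr_path p m) {l. l ! i = a \<and> drop (Suc i) l \<in> B} =
    stationary_prob p a * measure_pmf.prob (apr_chain p (m - Suc i) a) B"
proof -
  have "pmf (bernoulli_pmf (p / (1 + p))) b = stationary_prob p b" for b
    using assms by (simp add: stationary_prob_def divide_simps)
  then have "measure_pmf.prob (apr_path p m) {l. l ! i = a \<and> drop (Suc i) l \<in> B} =
      (\<Sum>b\<in>UNIV. stationary_prob p b * trans_prob p b (Suc i) a)
      * measure_pmf.prob (apr_chain p (m - Suc i) a) B"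
    using assms by (simp add: apr_path_eq_bind_apr_chain measure_bind_pmf_finite[of UNIV]
        apr_chain_markov sum_distrib_right mult.assoc)
  then show ?thesis using stationary_prob_trans_prob[OF assms(1)] by simp
qed

lemma apr_path_one_point:
  assumes "0 \<le> p" "p \<le> 1" "i < m"
  shows "measure_pmf.prob (apr_path p m) {l. l ! i = a} = stationary_prob p a"
  using apr_path_markov[OF assms, of a UNIV] by simp

lemma apr_path_two_point:
  assumes "0 \<le> p" "p \<le> 1" "i \<le> j" "j < m"
  shows "measure_pmf.prob (apr_path p m) {l. l ! i = a \<and> l ! j = c} =
    stationary_prob p a * trans_prob p a (j - i) c"
proof (cases "i = j")
  case True
  then show ?thesis
    using assms by (cases "a = c") (auto simp: apr_path_one_point)
next
  case False
  have "measure_pmf.prob (apr_path p m) {l. l ! i = a \<and> l ! j = c} =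
      measure_pmf.prob (apr_path p m) {l. l ! i = a \<and> drop (Suc i) l \<in> {l'. l' ! (j - Suc i) = c}}"
    using assms False by (intro measure_pmf_prob_cong) (auto dest!: length_apr_path)
  also have "\<dots> = stationary_prob p a * trans_prob p a (j - i) c"
    using assms False by (subst apr_path_markov) (simp_all add: apr_chain_one_point Suc_diff_Suc)
  finally show ?thesis .
qed

lemma apr_path_three_point:
  assumes "0 \<le> p" "p \<le> 1" "i < j" "j < l" "l < m"
  shows "measure_pmf.prob (apr_path p m) {w. w ! i = a \<and> w ! j = c \<and> w ! l = e} =
    stationary_prob p a * trans_prob p a (j - i) c * trans_prob p c (l - j) e"
proof -
  have "measure_pmf.prob (apr_path p m) {w. w ! i = a \<and> w ! j = c \<and> w ! l = e} =
      measure_pmf.prob (apr_path p m)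
        {w. w ! i = a \<and> drop (Suc i) w \<in> {w'. w' ! (j - Suc i) = c \<and> w' ! (l - Suc i) = e}}"
    using assms by (intro measure_pmf_prob_cong) (auto dest!: length_apr_path)
  also have "\<dots> = stationary_prob p a * trans_prob p a (j - i) c * trans_prob p c (l - j) e"
    using assms by (subst apr_path_markov) (simp_all add: apr_chain_two_point Suc_diff_Suc)
  finally show ?thesis .
qed

definition rel_cov :: "bool list pmf \<Rightarrow> nat \<Rightarrow> nat \<Rightarrow> real" where
  "rel_cov D i j =
     (measure_pmf.prob D {w. w ! i \<and> w ! j}
      - measure_pmf.prob D {w. w ! i} * measure_pmf.prob D {w. w ! j})
     / (measure_pmf.prob D {w. w ! i} * measure_pmf.prob D {w. w ! j})"

lemma rel_cov_commute: "rel_cov D i j = rel_cov D j i"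
proof -
  have "{w. w ! i \<and> w ! j} = {w. w ! j \<and> w ! i}" by auto
  then show ?thesis by (simp add: rel_cov_def mult.commute)
qed

lemma rel_cov_apr_path:
  assumes "0 < p" "p \<le> 1" "i \<le> j" "j < m"
  shows "rel_cov (apr_path p m) i j = (-p) ^ (j - i) / p"
proof -
  have single: "measure_pmf.prob (apr_path p m) {w. w ! l} = p / (1 + p)" if "l \<in> {i, j}" for l
    using assms that apr_path_one_point[of p l m True] by (auto simp: stationary_prob_def)
  have joint: "measure_pmf.prob (apr_path p m) {w. w ! i \<and> w ! j} =
      p / (1 + p) * (p / (1 + p) + (1 - p / (1 + p)) * (-p) ^ (j - i))"
    using assms apr_path_two_point[of p i j m True True] by (simp add: stationary_prob_def trans_prob_def)
  have "1 + p \<noteq> 0" using assms by simp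
  then show ?thesis
    using assms unfolding rel_cov_def joint single[of i, simplified] single[of j, simplified]
    by (simp add: divide_simps) (simp add: algebra_simps)
qed

lemma apr_cycle_eq_map_apr_path:
  "apr_cycle p (Suc m) = map_pmf (\<lambda>l. l @ [\<not> hd l \<and> \<not> last l]) (apr_path p m)"
  by (simp add: apr_cycle_def apr_path_def map_bind_pmf)

lemma prob_apr_cycle:
  assumes "1 \<le> m"
  shows "measure_pmf.prob (apr_cycle p (Suc m)) {w. P w} =
    measure_pmf.prob (apr_path p m) {l. P (l @ [\<not> l ! 0 \<and> \<not> l ! (m - 1)])}"
  unfolding apr_cycle_eq_map_apr_path measure_map_pmf
proof (intro measure_pmf_prob_cong)
  fix l assume "l \<in> set_pmf (apr_path p m)"
  then have "length l = m" using assms by (rule length_apr_path)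
  moreover have "l \<noteq> []" using \<open>length l = m\<close> assms by auto
  ultimately have "hd l = l ! 0" "last l = l ! (m - 1)"
    by (simp_all add: hd_conv_nth last_conv_nth)
  then show "l \<in> (\<lambda>l. l @ [\<not> hd l \<and> \<not> last l]) -` {w. P w} \<longleftrightarrow>
      l \<in> {l. P (l @ [\<not> l ! 0 \<and> \<not> l ! (m - 1)])}"
    by simp
qed

lemma apr_cycle_prob_inner:
  assumes "i < m" "j < m"
  shows "measure_pmf.prob (apr_cycle p (Suc m)) {w. w ! i \<and> w ! j} =
    measure_pmf.prob (apr_path p m) {l. l ! i \<and> l ! j}"
  using assms by (subst prob_apr_cycle)
    (auto simp: nth_append intro!: measure_pmf_prob_cong dest!: length_apr_path)

lemma apr_cycle_prob_last:
  assumes "0 \<le> p" "p \<le> 1" "odd m"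
  shows "measure_pmf.prob (apr_cycle p (Suc m)) {w. w ! m} = (1 + p ^ m) / (1 + p)\<^sup>2"
proof -
  have "1 \<le> m" using \<open>odd m\<close> by (simp add: odd_pos Suc_le_eq)
  have "measure_pmf.prob (apr_cycle p (Suc m)) {w. w ! m} =
      measure_pmf.prob (apr_path p m) {l. l ! 0 = False \<and> l ! (m - 1) = False}"
    using assms \<open>1 \<le> m\<close>
    by (subst prob_apr_cycle) (auto simp: nth_append intro!: measure_pmf_prob_cong dest!: length_apr_path)
  also have "\<dots> = stationary_prob p False * trans_prob p False (m - 1) False"
    using assms \<open>1 \<le> m\<close> by (subst apr_path_two_point) auto
  also have "\<dots> = (1 + p ^ m) / (1 + p)\<^sup>2"
  proof -
    obtain n where m: "m = Suc n" "even n" using assms by (cases m) auto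
    have "1 + p \<noteq> 0" using assms by simp
    then show ?thesis using m
      by (simp add: stationary_prob_def trans_prob_def power2_eq_square divide_simps)
  qed
  finally show ?thesis .
qed

lemma apr_cycle_prob_joint_last:
  assumes "0 \<le> p" "p \<le> 1" "i < m"
  shows "measure_pmf.prob (apr_cycle p (Suc m)) {w. w ! i \<and> w ! m} =
    p * (1 - (-p) ^ i) * (1 - (-p) ^ (m - 1 - i)) / (1 + p) ^ 3"
proof -
  have "measure_pmf.prob (apr_cycle p (Suc m)) {w. w ! i \<and> w ! m} =
      measure_pmf.prob (apr_path p m) {l. l ! 0 = False \<and> l ! i = True \<and> l ! (m - 1) = False}"
    using assms by (subst prob_apr_cycle)
      (auto simp: nth_append intro!: measure_pmf_prob_cong dest!: length_apr_path)
  also have "\<dots> = p * (1 - (-p) ^ i) * (1 - (-p) ^ (m - 1 - i)) / (1 + p) ^ 3"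
  proof (cases "0 < i \<and> i < m - 1")
    case True
    have "1 + p \<noteq> 0" using assms by simp
    then show ?thesis
      using assms True by (subst apr_path_three_point) (auto simp: stationary_prob_def trans_prob_def
        power3_eq_cube divide_simps, simp_all add: algebra_simps)
  next
    case False
    then have "i = 0 \<or> i = m - 1" using assms by auto
    then have "{l. l ! 0 = False \<and> l ! i = True \<and> l ! (m - 1) = False} = {}"
      and "(1 - (-p) ^ i) * (1 - (-p) ^ (m - 1 - i)) = 0"
      by auto
    then show ?thesis by (simp only: measure_empty mult.assoc mult_zero_right divide_eq_0_iff)
  qed
  finally show ?thesis .
qed

lemma rel_cov_apr_cycle_inner:
  assumes "i < m" "j < m"
  shows "rel_cov (apr_cycle p (Suc m)) i j = rel_cov (apr_path p m) i j"
  using assms apr_cycle_prob_inner[of i m i] apr_cycle_prob_inner[of j m j] apr_cycle_prob_inner[of i m j]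
  by (simp add: rel_cov_def)

lemma rel_cov_apr_cycle_last:
  assumes "0 < p" "p \<le> 1" "odd m" "i < m"
  shows "rel_cov (apr_cycle p (Suc m)) i m =
    (1 - (-p) ^ (m - 1 - i)) * (1 - (-p) ^ i) / (1 + p ^ m) - 1"
proof -
  have p: "0 \<le> p" "0 < 1 + p ^ m" using assms by (simp_all add: add_pos_nonneg)
  have single: "measure_pmf.prob (apr_cycle p (Suc m)) {w. w ! i} = p / (1 + p)"
    using assms apr_cycle_prob_inner[of i m i p] apr_path_one_point[of p i m True]
    by (simp add: stationary_prob_def)
  show ?thesis
    using assms p unfolding rel_cov_def single apr_cycle_prob_last[OF p(1) assms(2,3)]
      apr_cycle_prob_joint_last[OF p(1) assms(2,4)]
    by (simp add: divide_simps power2_eq_square power3_eq_cube) (simp add: algebra_simps)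
qed

lemma rel_cov_apr_cycle_last_last:
  assumes "0 < p" "p \<le> 1" "odd m"
  shows "rel_cov (apr_cycle p (Suc m)) m m = (p\<^sup>2 + 2 * p - p ^ m) / (1 + p ^ m)"
proof -
  have p: "0 \<le> p" "0 < 1 + p ^ m" using assms by (simp_all add: add_pos_nonneg)
  then show ?thesis
    using assms unfolding rel_cov_def conj_absorb apr_cycle_prob_last[OF p(1) assms(2,3)]
    by (simp add: divide_simps power2_eq_square) (simp add: algebra_simps)
qed

lemma disagree_c_iff:
  "e \<in> disagree Mt Mc \<Longrightarrow> e \<in> disagree_c Mt Mc \<longleftrightarrow> e \<notin> disagree_t Mt Mc"
  by (auto simp: disagree_def disagree_t_def disagree_c_def)

lemma is_matching_doubleton:
  assumes "is_matching A M" "e \<in> M"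
  obtains a b where "a \<noteq> b" "e = {a, b}"
  using assms unfolding is_matching_def by meson

lemma is_matching_eqI:
  assumes "is_matching A M" "e \<in> M" "e' \<in> M" "x \<in> e" "x \<in> e'"
  shows "e = e'"
  using assms unfolding is_matching_def by (meson disjoint_iff)

lemma component_edge_alternates:
  assumes "is_component Mt Mc v k" "j \<in> {1..k}"
  shows "edge v j \<in> disagree_t Mt Mc \<longleftrightarrow> (edge v 1 \<in> disagree_t Mt Mc \<longleftrightarrow> odd j)"
proof -
  have "1 \<le> j" "j \<le> k" using assms(2) by auto
  then show ?thesis
  proof (induction j rule: dec_induct)
    case (step j)
    then have "edge v j \<in> disagree_t Mt Mc \<longleftrightarrow> edge v (Suc j) \<in> disagree_c Mt Mc"
      "edge v (Suc j) \<in> disagree Mt Mc"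
      using assms(1) by (auto simp: is_component_def)
    then show ?case using step disagree_c_iff by auto
  qed simp
qed

lemma component_cycle_even:
  assumes "is_matching A Mt" "is_matching A Mc" "is_component Mt Mc v k" "v (k + 1) = v 1"
  shows "even k"
proof (rule ccontr)
  assume "odd k"
  have k: "1 \<le> k" and inj: "inj_on v {1..k}"
    and dis: "\<And>j. j \<in> {1..k} \<Longrightarrow> edge v j \<in> disagree Mt Mc"
    using assms(3,4) unfolding is_component_def by simp_all
  \<comment> \<open>On an odd cycle the first and last edges lie in the same matching and share v 1.\<close>
  have same_side: "edge v k \<in> disagree_t Mt Mc \<longleftrightarrow> edge v 1 \<in> disagree_t Mt Mc"
    using component_edge_alternates[OF assms(3), of k] k \<open>odd k\<close> by auto
  obtain M where M: "is_matching A M" "edge v 1 \<in> M" "edge v k \<in> M"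
  proof (cases "edge v 1 \<in> disagree_t Mt Mc")
    case True
    then have "edge v k \<in> disagree_t Mt Mc" using same_side by simp
    with True show ?thesis by (intro that[OF assms(1)]) (auto simp: disagree_t_def)
  next
    case False
    then have "edge v 1 \<in> disagree_c Mt Mc" "edge v k \<in> disagree_c Mt Mc"
      using same_side disagree_c_iff[OF dis[of 1]] disagree_c_iff[OF dis[of k]] k by auto
    then show ?thesis by (intro that[OF assms(2)]) (auto simp: disagree_c_def)
  qed
  have "v 1 \<in> edge v 1" "v 1 \<in> edge v k" using assms(4) by (simp_all add: edge_def)
  then have same_edge: "edge v 1 = edge v k"
    by (rule is_matching_eqI[OF M])
  show False
  proof (cases "k = 1")
    case True
    obtain a b where "a \<noteq> b" "edge v 1 = {a, b}"
      using M by (meson is_matching_doubleton)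
    then show False using True assms(4) by (auto simp: edge_def doubleton_eq_iff)
  next
    case False
    then have "2 \<in> {1..k}" "2 \<noteq> k" using k \<open>odd k\<close> by auto
    then have "v 2 \<noteq> v 1" "v 2 \<noteq> v k"
      using inj_onD[OF inj, of 2 1] inj_onD[OF inj, of 2 k] k by auto
    moreover have "v 2 \<in> edge v k" unfolding same_edge[symmetric] by (simp add: edge_def numeral_2_eq_2)
    ultimately show False using assms(4) by (simp add: edge_def)
  qed
qed

lemma HT_est_eq_sum:
  assumes "is_component Mt Mc v k"
  shows "HT_est Mt Mc Y D v k = (\<lambda>W. \<Sum>j=1..k.
     (if edge v j \<in> disagree_t Mt Mc then 1 else -1) * Y (edge v j)
       / measure_pmf.prob D {w. w ! (j - 1)} * of_bool (W ! (j - 1)))"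
proof
  fix W
  have "edge v j \<in> disagree Mt Mc" if "j \<in> {1..k}" for j
    using assms that by (auto simp: is_component_def)
  then show "HT_est Mt Mc Y D v k W = (\<Sum>j=1..k.
     (if edge v j \<in> disagree_t Mt Mc then 1 else -1) * Y (edge v j)
       / measure_pmf.prob D {w. w ! (j - 1)} * of_bool (W ! (j - 1)))"
    unfolding HT_est_def sum.inter_filter[OF finite_atLeastAtMost] sum_subtractf[symmetric]
    by (intro sum.cong refl) (auto simp: disagree_c_iff)
qed

lemma variance_HT_est:
  assumes "is_component Mt Mc v k"
  shows "measure_pmf.variance D (HT_est Mt Mc Y D v k) =
    (\<Sum>j=1..k. \<Sum>q=1..k. (-1) ^ (j + q) * Y (edge v j) * Y (edge v q) * rel_cov D (j - 1) (q - 1))"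
proof -
  have sign: "(if edge v j \<in> disagree_t Mt Mc then 1 else -1)
      * (if edge v q \<in> disagree_t Mt Mc then 1 else -1) = (-1 :: real) ^ (j + q)"
    if "j \<in> {1..k}" "q \<in> {1..k}" for j q
    using component_edge_alternates[OF assms that(1)] component_edge_alternates[OF assms that(2)]
    by (auto simp: minus_one_power_iff)
  show ?thesis
    unfolding HT_est_eq_sum[OF assms] variance_sum_indicators[OF finite_atLeastAtMost]
    by (intro sum.cong refl) (simp add: rel_cov_def field_simps flip: sign)
qed

lemma sum_square_split_last:
  fixes f :: "nat \<Rightarrow> nat \<Rightarrow> 'a::comm_semiring_1"
  assumes "\<And>j q. f j q = f q j"
  shows "(\<Sum>j=1..Suc m. \<Sum>q=1..Suc m. f j q) =
    (\<Sum>j=1..m. \<Sum>q=1..m. f j q) + 2 * (\<Sum>j=1..m. f j (Suc m)) + f (Suc m) (Suc m)"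
proof -
  have "{1..Suc m} = insert (Suc m) {1..m}" by auto
  then have "(\<Sum>j=1..Suc m. \<Sum>q=1..Suc m. f j q) = (\<Sum>j=1..m. \<Sum>q=1..m. f j q)
      + (\<Sum>q=1..m. f (Suc m) q) + (\<Sum>j=1..m. f j (Suc m)) + f (Suc m) (Suc m)"
    by (simp add: sum.distrib add_ac)
  moreover have "(\<Sum>q=1..m. f (Suc m) q) = (\<Sum>j=1..m. f j (Suc m))"
    by (subst assms) (rule refl)
  ultimately show ?thesis by (simp add: mult_2 add_ac)
qed

lemma sum_square_symmetric:
  fixes f :: "nat \<Rightarrow> nat \<Rightarrow> 'a::comm_semiring_1"
  assumes "\<And>j q. f j q = f q j"
  shows "(\<Sum>j=1..m. \<Sum>q=1..m. f j q) = (\<Sum>j=1..m. f j j) + 2 * (\<Sum>j=1..m. \<Sum>q=j+1..m. f j q)"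
proof (induction m)
  case (Suc m)
  have "(\<Sum>j=1..Suc m. \<Sum>q=j+1..Suc m. f j q) = (\<Sum>j=1..m. (\<Sum>q=j+1..m. f j q) + f j (Suc m))"
    by (auto intro!: sum.cong)
  then have upper: "(\<Sum>j=1..Suc m. \<Sum>q=j+1..Suc m. f j q) =
      (\<Sum>j=1..m. \<Sum>q=j+1..m. f j q) + (\<Sum>j=1..m. f j (Suc m))"
    by (simp add: sum.distrib)
  show ?case
    unfolding sum_square_split_last[OF assms] Suc.IH upper by (simp add: distrib_left add_ac)
qed simp

lemma sum_rel_cov_apr_path:
  assumes "0 < p" "p \<le> 1"
  shows "(\<Sum>j=1..m. \<Sum>q=1..m. (-1) ^ (j + q) * y j * y q * rel_cov (apr_path p m) (j - 1) (q - 1)) =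
    1 / p * (\<Sum>j=1..m. (y j)\<^sup>2) + 2 * (\<Sum>j=1..m. \<Sum>q=j+1..m. p ^ (q - j - 1) * y j * y q)"
proof -
  let ?f = "\<lambda>j q. (-1) ^ (j + q) * y j * y q * rel_cov (apr_path p m) (j - 1) (q - 1)"
  have diagonal: "?f j j = 1 / p * (y j)\<^sup>2" if "j \<in> {1..m}" for j
  proof -
    have "j - 1 < m" using that by auto
    then show ?thesis using assms rel_cov_apr_path[of p "j - 1" "j - 1" m] by (simp add: power2_eq_square)
  qed
  have upper: "?f j q = p ^ (q - j - 1) * y j * y q" if "j \<in> {1..m}" "q \<in> {j+1..m}" for j q
  proof -
    have "j < q" "j - 1 \<le> q - 1" "q - 1 < m" "q - 1 - (j - 1) = q - j" using that by auto
    then have "?f j q = ((-1) ^ (j + q) * ((-p) ^ (q - j) / p)) * (y j * y q)"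
      using assms rel_cov_apr_path[of p "j - 1" "q - 1" m] by (simp add: mult_ac)
    also have "(-1) ^ (j + q) * ((-p) ^ (q - j) / p) = p ^ (q - j) / p"
      using \<open>j < q\<close> by (simp add: minus_one_power_iff flip: power_mult_distrib)
    also have "\<dots> = p ^ (q - j - 1)"
      using \<open>j < q\<close> assms by (simp add: power_diff)
    finally show ?thesis by (simp add: mult_ac)
  qed
  have "(\<Sum>j=1..m. \<Sum>q=1..m. ?f j q) = (\<Sum>j=1..m. ?f j j) + 2 * (\<Sum>j=1..m. \<Sum>q=j+1..m. ?f j q)"
    by (rule sum_square_symmetric) (simp add: rel_cov_commute add.commute mult.commute mult.left_commute)
  also have "\<dots> = (\<Sum>j=1..m. 1 / p * (y j)\<^sup>2)
      + 2 * (\<Sum>j=1..m. \<Sum>q=j+1..m. p ^ (q - j - 1) * y j * y q)"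
    using diagonal upper by (intro arg_cong2[where f = "(+)"] arg_cong[where f = "(*) 2"] sum.cong) simp_all
  finally show ?thesis by (simp add: sum_distrib_left)
qed

lemma variance_HT_est_apr_cycle:
  fixes Y :: "'a set \<Rightarrow> real"
  assumes "is_matching A Mt" "is_matching A Mc" "is_component Mt Mc v k" "v (k + 1) = v 1"
    and "0 < p" "p \<le> 1"
  defines "y \<equiv> \<lambda>j. Y (edge v j)"
  shows "measure_pmf.variance (apr_cycle p k) (HT_est Mt Mc Y (apr_cycle p k) v k) =
    1 / p * (\<Sum>j=1..k-1. (y j)\<^sup>2) + 2 * (\<Sum>j=1..k-1. \<Sum>q=j+1..k-1. p ^ (q - j - 1) * y j * y q)
    + (p\<^sup>2 + 2 * p - p ^ (k - 1)) / (1 + p ^ (k - 1)) * (y k)\<^sup>2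
    + 2 * (\<Sum>j=1..k-1. (-1) ^ j *
        ((1 - (-p) ^ (k - 1 - j)) * (1 - (-p) ^ (j - 1)) / (1 + p ^ (k - 1)) - 1) * y j * y k)"
proof -
  have "even k" "1 \<le> k"
    using component_cycle_even[OF assms(1-4)] assms(3) by (auto simp: is_component_def)
  then obtain m where k: "k = Suc m" and "odd m" by (cases k) auto
  let ?f = "\<lambda>j q. (-1) ^ (j + q) * y j * y q * rel_cov (apr_cycle p k) (j - 1) (q - 1)"
  have "measure_pmf.variance (apr_cycle p k) (HT_est Mt Mc Y (apr_cycle p k) v k) =
      (\<Sum>j=1..Suc m. \<Sum>q=1..Suc m. ?f j q)"
    unfolding y_def k by (rule variance_HT_est[OF assms(3)[unfolded k]])
  also have "\<dots> = (\<Sum>j=1..m. \<Sum>q=1..m. ?f j q) + 2 * (\<Sum>j=1..m. ?f j (Suc m)) + ?f (Suc m) (Suc m)"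
    by (rule sum_square_split_last) (simp add: rel_cov_commute add.commute mult.commute mult.left_commute)
  also have "(\<Sum>j=1..m. \<Sum>q=1..m. ?f j q) =
      (\<Sum>j=1..m. \<Sum>q=1..m. (-1) ^ (j + q) * y j * y q * rel_cov (apr_path p m) (j - 1) (q - 1))"
    unfolding k by (intro sum.cong refl) (subst rel_cov_apr_cycle_inner, auto)
  also have "\<dots> = 1 / p * (\<Sum>j=1..m. (y j)\<^sup>2)
      + 2 * (\<Sum>j=1..m. \<Sum>q=j+1..m. p ^ (q - j - 1) * y j * y q)"
    using assms(5,6) by (rule sum_rel_cov_apr_path)
  also have "(\<Sum>j=1..m. ?f j (Suc m)) = (\<Sum>j=1..m. (-1) ^ j *
      ((1 - (-p) ^ (m - j)) * (1 - (-p) ^ (j - 1)) / (1 + p ^ m) - 1) * y j * y (Suc m))"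
  proof (intro sum.cong refl)
    fix j assume "j \<in> {1..m}"
    then have "j - 1 < m" "m - 1 - (j - 1) = m - j" "(-1 :: real) ^ (j + Suc m) = (-1) ^ j"
      using \<open>odd m\<close> by (auto simp: minus_one_power_iff)
    then show "?f j (Suc m) = (-1) ^ j *
        ((1 - (-p) ^ (m - j)) * (1 - (-p) ^ (j - 1)) / (1 + p ^ m) - 1) * y j * y (Suc m)"
      using rel_cov_apr_cycle_last[OF assms(5,6) \<open>odd m\<close> \<open>j - 1 < m\<close>] k
      by (simp add: mult_ac)
  qed
  also have "?f (Suc m) (Suc m) = (p\<^sup>2 + 2 * p - p ^ m) / (1 + p ^ m) * (y (Suc m))\<^sup>2"
    using rel_cov_apr_cycle_last_last[OF assms(5,6) \<open>odd m\<close>] k by (simp add: power2_eq_square)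
  finally show ?thesis
    unfolding k by (simp add: add_ac)
qed

theorem theorem1:
  fixes A :: "'a set" and N :: nat and Mt Mc :: "'a set set"
    and Y :: "'a set \<Rightarrow> real" and p :: real
    and v :: "nat \<Rightarrow> 'a" and k :: nat
  assumes "finite A" and "card A = 2 * N"
    and "is_matching A Mt" and "is_matching A Mc"
    and "0 < p" and "p < 1"
    and "is_component Mt Mc v k"
  defines "y \<equiv> (\<lambda>j. Y (edge v j))"
  defines "D \<equiv> apr_design p v k"
  shows "(v (k + 1) \<noteq> v 1 \<longrightarrow>
            measure_pmf.variance D (HT_est Mt Mc Y D v k) =
              (1 / p) * (\<Sum>j=1..k. (y j)\<^sup>2)
              + 2 * (\<Sum>j=1..k. \<Sum>q=j+1..k. p ^ (q - j - 1) * y j * y q))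
       \<and> (v (k + 1) = v 1 \<longrightarrow>
            measure_pmf.variance D (HT_est Mt Mc Y D v k) =
              (1 / p) * (\<Sum>j=1..k-1. (y j)\<^sup>2)
              + 2 * (\<Sum>j=1..k-1. \<Sum>q=j+1..k-1. p ^ (q - j - 1) * y j * y q)
              + (p\<^sup>2 + 2 * p - p ^ (k - 1)) / (1 + p ^ (k - 1)) * (y k)\<^sup>2
              + 2 * (\<Sum>j=1..k-1. (-1) ^ j *
                  ((1 - (-p) ^ (k - 1 - j)) * (1 - (-p) ^ (j - 1)) / (1 + p ^ (k - 1)) - 1)
                  * y j * y k))"
proof -
  have "p \<le> 1" using assms(6) by simp
  then show ?thesis
    unfolding D_def apr_design_def y_def
    using variance_HT_est[OF assms(7)] sum_rel_cov_apr_path[OF assms(5)]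
      variance_HT_est_apr_cycle[OF assms(3,4,7) _ assms(5)]
    by simp
qed

end
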